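(* Let $\omega\in\mathbb{C}^*$. For every $[D]\in\mathcal{D}(\vec B)$, $$F([D])=\omega^{2\,\mathrm{wr}(D)}\;\mathcal{C}(b_{\rm out};\partial_{\rm out}D)\circ G([D])\circ\mathcal{C}(b_{\rm in};\partial_{\rm in}D),$$ where $\partial_{\rm out}D$ and $\partial_{\rm in}D$ carry their vertical orderings and $b_{\rm out},b_{\rm in}$ carry their boundary-orientations.
   Context: Directed biangle. Let $\mathbb{B}=[0,1]\times\mathbb{R}$ with its standard orientation, boundary arcs $b_{\rm out}=\{0\}\times\mathbb{R}$, $b_{\rm in}=\{1\}\times\mathbb{R}$; the $\mathbb{R}$-coordinate is the horizontal coordinate. The boundary-orientation (compatible with clockwise traversal) is the direction of increasing $\mathbb{R}$-coordinate on $b_{\rm out}$ and of decreasing $\mathbb{R}$-coordinate on $b_{\rm in}$. Diagrams. A boundary-ordered oriented tangle diagram $D$ in $\mathbb{B}$: compact oriented 1-manifold properly immersed in $\mathbb{B}$, with only finitely many transverse interior double points (crossings) carrying over/under information, plus a total order $\succ$ ("vertical ordering") on the distinct endpoints on each of $b_{\rm in}$, $b_{\rm out}$; $\partial_{\rm in}D=\partial D\cap b_{\rm in}$, $\partial_{\rm out}D=\partial D\cap b_{\rm out}$. $\mathcal{D}(\vec B)$: classes modulo isotopy through such diagrams and framed Reidemeister moves I (cancellation of adjacent opposite kinks), II, III. Crossing sign: $+1$ if (tangent of over-strand, tangent of under-strand) is positively oriented, else $-1$; $\mathrm{wr}(D)$ = sum of signs. $[D_1]\otimes[D_2]$: disjoint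 union, $D_1$ at smaller horizontal coordinates, all endpoints of $D_2$ vertically above those of $D_1$ on each arc. $[D_1]\circ[D_2]$ (if $|\partial_{\rm in}D_1|=|\partial_{\rm out}D_2|$ and the horizontal-order-preserving bijection preserves vertical orders and orientations): glue $b_{\rm in}$ of $D_1$'s biangle to $b_{\rm out}$ of $D_2$'s. $V=\mathbb{C}^2$, basis $\xi_+,\xi_-$; factors of $V^{\otimes|\partial_{\rm in}D|}$, $V^{\otimes|\partial_{\rm out}D|}$ correspond to endpoints in increasing horizontal order. For a finite set $Z\subset b$ of a boundary arc $b$ and a state $s_0:Z\to\{\pm\}$, with basis vector $\xi^{s_0}=\xi_{s_0(z_1)}\otimes\cdots\otimes\xi_{s_0(z_k)}$ ($z_i$ in increasing horizontal order), the signed order correction amount is $\mathcal{C}(b;Z,s_0)=\sum_{x,y\in Z,\ x\prec y}\mathrm{sgn}(b;\overrightarrow{xy})\,s_0(x)s_0(y)$ (signs read as $\pm1$, $x\prec y$ in the vertical ordering), where $\mathrm{sgn}(b;\overrightarrow{xy})=+1$ if the direction from $x$ to $y$ along $b$ agrees with the boundary-orientation of $b$ and $-1$ otherwise; the signed order correction operator $\mathcal{C}(b;Z):V^{\otimes|Z|}\to V^{\otimes|Z|}$ is the diagonal map $\xi^{s_0}\mapsto\omega^{\mathcal{C}(b;Z,s_0)}\xi^{s_0}$. Elementary diagrams ($x_1,x_2\in b_{\rm in}$, $y_1,y_2\in b_{\rm out}$, with $x_1$ below $x_2$, $y_1$ below $y_2$ horizontally): identity (one arc $b_{\rm in}\to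 b_{\rm out}$); cup (one arc with ends $y_1\succ y_2$ on $b_{\rm out}$); cap (one arc with ends $x_1\succ x_2$ on $b_{\rm in}$); height exchange type 1 (disjoint arcs $x_1$–$y_1$, $x_2$–$y_2$, $x_1\succ x_2$, $y_2\succ y_1$) and type 2 ($x_2\succ x_1$, $y_1\succ y_2$); positive/negative crossing (arcs $x_1$–$y_2$, $x_2$–$y_1$ with one crossing of sign $+1$/$-1$, both oriented from $b_{\rm in}$ to $b_{\rm out}$ or both reversed, $x_1\succ x_2$, $y_1\succ y_2$). Orientations of non-crossing elementary arcs are arbitrary. $G$: the unique map $[D]\mapsto G([D]):V^{\otimes|\partial_{\rm in}D|}\to V^{\otimes|\partial_{\rm out}D|}$, multiplicative for $\circ$ and $\otimes$, with values: identity $\mapsto\mathrm{id}$; cup: $1\mapsto\xi_+\otimes\xi_--\omega^4\xi_-\otimes\xi_+$; cap: $\xi_+\otimes\xi_-\mapsto-\omega^{-4}$, $\xi_-\otimes\xi_+\mapsto1$, others $0$; height exchange type 1: $\xi_+\otimes\xi_-\mapsto\xi_+\otimes\xi_-+(\omega^4-\omega^{-4})\xi_-\otimes\xi_+$, others fixed, type 2 the inverse; positive crossing: $\xi_i\otimes\xi_i\mapsto\omega^{-4}\xi_i\otimes\xi_i$, $\xi_+\otimes\xi_-\mapsto\xi_-\otimes\xi_+$, $\xi_-\otimes\xi_+\mapsto\xi_+\otimes\xi_-+(\omega^{-4}-\omega^4)\xi_-\otimes\xi_+$; negative crossing the inverse. $F$ (Reshetikhin–Turaev operator invariant for the 2-dimensional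 representation of $\mathcal{U}_q(\mathfrak{sl}_2)$, known to exist): the unique map with the same source/target, multiplicative for $\circ$ and $\otimes$, with values: identity $\mapsto\mathrm{id}$; cup: $1\mapsto\omega\,\xi_+\otimes\xi_--\omega^5\xi_-\otimes\xi_+$; cap: $\xi_+\otimes\xi_-\mapsto-\omega^{-5}$, $\xi_-\otimes\xi_+\mapsto\omega^{-1}$, others $0$; height exchange type 1 (map $M$): $\xi_i\otimes\xi_i\mapsto\omega^2\xi_i\otimes\xi_i$, $\xi_+\otimes\xi_-\mapsto\omega^{-2}(\xi_+\otimes\xi_-+(\omega^4-\omega^{-4})\xi_-\otimes\xi_+)$, $\xi_-\otimes\xi_+\mapsto\omega^{-2}\xi_-\otimes\xi_+$; type 2: $M^{-1}$; positive crossing: $M^{-1}\circ P$ where $P(\xi_i\otimes\xi_j)=\xi_j\otimes\xi_i$; negative crossing: $(M^{-1}\circ P)^{-1}$. *)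

theory Defs
  imports Complex_Main
begin

text \<open>
Combinatorial model of boundary-ordered oriented tangle diagrams in the directed biangle.
Every diagram is (up to isotopy) a composition (\<circ>) of tensor products (\<otimes>) of the
elementary diagrams, and F, G are the unique maps multiplicative for \<circ> and \<otimes> with the
prescribed values on elementary diagrams.  We therefore represent diagrams by
expressions built from elementary diagrams, the empty diagram, \<otimes> and \<circ>, together with
their boundary data.

Boundary data on an arc: a list, in increasing horizontal order, of endpoints.
For each endpoint we record its vertical rank (heights form a permutation of
0..n-1; x \<prec> y iff rank x < rank y) and a direction flag: True iff the strand
at that endpoint is oriented in the direction from b_in to b_out
(so gluing preserves orientations iff the flags agree).

States: True = +, False = -.  A linear map V^{\<otimes>m} \<rightarrow> V^{\<otimes>n} is encoded by its
matrix coefficients  A t s = coefficient of \<xi>^t in A(\<xi>^s).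
\<close>

datatype elem =
    EId bool            \<comment> \<open>identity arc; flag = direction\<close>
  | ECup bool           \<comment> \<open>cup, ends y1 \<succ> y2 on b_out; flag = direction at y1\<close>
  | ECap bool           \<comment> \<open>cap, ends x1 \<succ> x2 on b_in; flag = direction at x1\<close>
  | EHE1 bool bool      \<comment> \<open>height exchange type 1, directions of the arcs x1-y1, x2-y2\<close>
  | EHE2 bool bool
  | EPos bool           \<comment> \<open>positive crossing; True: both strands b_in \<rightarrow> b_out, False: both reversed\<close>
  | ENeg bool

datatype diag = DEmpty | DElem elem | DTens diag diag | DComp diag diag

fun elem_in_hts :: "elem \<Rightarrow> nat list" where
  "elem_in_hts (EId _) = [0]"
| "elem_in_hts (ECup _) = []"
| "elem_in_hts (ECap _) = [1, 0]"
| "elem_in_hts (EHE1 _ _) = [1, 0]"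
| "elem_in_hts (EHE2 _ _) = [0, 1]"
| "elem_in_hts (EPos _) = [1, 0]"
| "elem_in_hts (ENeg _) = [1, 0]"

fun elem_out_hts :: "elem \<Rightarrow> nat list" where
  "elem_out_hts (EId _) = [0]"
| "elem_out_hts (ECup _) = [1, 0]"
| "elem_out_hts (ECap _) = []"
| "elem_out_hts (EHE1 _ _) = [0, 1]"
| "elem_out_hts (EHE2 _ _) = [1, 0]"
| "elem_out_hts (EPos _) = [1, 0]"
| "elem_out_hts (ENeg _) = [1, 0]"

fun elem_in_dirs :: "elem \<Rightarrow> bool list" where
  "elem_in_dirs (EId o1) = [o1]"
| "elem_in_dirs (ECup _) = []"
| "elem_in_dirs (ECap o1) = [o1, \<not> o1]"
| "elem_in_dirs (EHE1 o1 o2) = [o1, o2]"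
| "elem_in_dirs (EHE2 o1 o2) = [o1, o2]"
| "elem_in_dirs (EPos o1) = [o1, o1]"
| "elem_in_dirs (ENeg o1) = [o1, o1]"

fun elem_out_dirs :: "elem \<Rightarrow> bool list" where
  "elem_out_dirs (EId o1) = [o1]"
| "elem_out_dirs (ECup o1) = [o1, \<not> o1]"
| "elem_out_dirs (ECap _) = []"
| "elem_out_dirs (EHE1 o1 o2) = [o1, o2]"
| "elem_out_dirs (EHE2 o1 o2) = [o1, o2]"
| "elem_out_dirs (EPos o1) = [o1, o1]"
| "elem_out_dirs (ENeg o1) = [o1, o1]"

text \<open>In D1 \<otimes> D2 the endpoints of D1 come first
horizontally and those of D2 lie vertically above those of D1.\<close>

fun in_hts :: "diag \<Rightarrow> nat list" where
  "in_hts DEmpty = []"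
| "in_hts (DElem e) = elem_in_hts e"
| "in_hts (DTens a b) = in_hts a @ map (\<lambda>h. h + length (in_hts a)) (in_hts b)"
| "in_hts (DComp a b) = in_hts b"

fun out_hts :: "diag \<Rightarrow> nat list" where
  "out_hts DEmpty = []"
| "out_hts (DElem e) = elem_out_hts e"
| "out_hts (DTens a b) = out_hts a @ map (\<lambda>h. h + length (out_hts a)) (out_hts b)"
| "out_hts (DComp a b) = out_hts a"

fun in_dirs :: "diag \<Rightarrow> bool list" where
  "in_dirs DEmpty = []"
| "in_dirs (DElem e) = elem_in_dirs e"
| "in_dirs (DTens a b) = in_dirs a @ in_dirs b"
| "in_dirs (DComp a b) = in_dirs b"

fun out_dirs :: "diag \<Rightarrow> bool list" where
  "out_dirs DEmpty = []"
| "out_dirs (DElem e) = elem_out_dirs e"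
| "out_dirs (DTens a b) = out_dirs a @ out_dirs b"
| "out_dirs (DComp a b) = out_dirs a"

text \<open>Composition D1 \<circ> D2 is defined iff the horizontal-order-preserving bijection
\<partial>_in D1 \<rightarrow> \<partial>_out D2 preserves vertical orders and orientations.\<close>

fun wf_diag :: "diag \<Rightarrow> bool" where
  "wf_diag DEmpty = True"
| "wf_diag (DElem e) = True"
| "wf_diag (DTens a b) = (wf_diag a \<and> wf_diag b)"
| "wf_diag (DComp a b) = (wf_diag a \<and> wf_diag b \<and> in_hts a = out_hts b \<and> in_dirs a = out_dirs b)"

fun elem_wr :: "elem \<Rightarrow> int" where
  "elem_wr (EPos _) = 1"
| "elem_wr (ENeg _) = -1"
| "elem_wr _ = 0"

fun writhe :: "diag \<Rightarrow> int" where
  "writhe DEmpty = 0"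
| "writhe (DElem e) = elem_wr e"
| "writhe (DTens a b) = writhe a + writhe b"
| "writhe (DComp a b) = writhe a + writhe b"

type_synonym mat = "bool list \<Rightarrow> bool list \<Rightarrow> complex"

definition mcomp :: "nat \<Rightarrow> mat \<Rightarrow> mat \<Rightarrow> mat" where
  "mcomp k A B = (\<lambda>t s. \<Sum>u\<in>{u :: bool list. length u = k}. A t u * B u s)"

definition mtens :: "nat \<Rightarrow> nat \<Rightarrow> mat \<Rightarrow> mat \<Rightarrow> mat" where
  "mtens n1 m1 A B = (\<lambda>t s. A (take n1 t) (take m1 s) * B (drop n1 t) (drop m1 s))"

definition mtab :: "((bool list \<times> bool list) \<times> complex) list \<Rightarrow> mat" where
  "mtab tab = (\<lambda>t s. case map_of tab (t, s) of Some c \<Rightarrow> c | None \<Rightarrow> 0)"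

definition idmat :: mat where
  "idmat = (\<lambda>t s. if t = s then 1 else 0)"

text \<open>Values of G on elementary diagrams (type 2 / negative crossing: the inverses,
written out explicitly).\<close>

fun G_elem :: "complex \<Rightarrow> elem \<Rightarrow> mat" where
  "G_elem w (EId _) = idmat"
| "G_elem w (ECup _) = mtab [(([True, False], []), 1), (([False, True], []), - (w ^ 4))]"
| "G_elem w (ECap _) = mtab [(([], [True, False]), - (inverse w ^ 4)), (([], [False, True]), 1)]"
| "G_elem w (EHE1 _ _) = mtab
     [(([True, True], [True, True]), 1), (([False, False], [False, False]), 1),
      (([True, False], [True, False]), 1), (([False, True], [True, False]), w ^ 4 - (inverse w ^ 4)),
      (([False, True], [False, True]), 1)]"
| "G_elem w (EHE2 _ _) = mtab
     [(([True, True], [True, True]), 1), (([False, False], [False, False]), 1),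
      (([True, False], [True, False]), 1), (([False, True], [True, False]), - (w ^ 4 - (inverse w ^ 4))),
      (([False, True], [False, True]), 1)]"
| "G_elem w (EPos _) = mtab
     [(([True, True], [True, True]), inverse w ^ 4), (([False, False], [False, False]), inverse w ^ 4),
      (([False, True], [True, False]), 1),
      (([True, False], [False, True]), 1), (([False, True], [False, True]), inverse w ^ 4 - (w ^ 4))]"
| "G_elem w (ENeg _) = mtab
     [(([True, True], [True, True]), w ^ 4), (([False, False], [False, False]), w ^ 4),
      (([True, False], [True, False]), w ^ 4 - (inverse w ^ 4)), (([False, True], [True, False]), 1),
      (([True, False], [False, True]), 1)]"

definition F_M :: "complex \<Rightarrow> mat" where
  "F_M w = mtab
     [(([True, True], [True, True]), w ^ 2), (([False, False], [False, False]), w ^ 2),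
      (([True, False], [True, False]), inverse w ^ 2),
      (([False, True], [True, False]), inverse w ^ 2 * (w ^ 4 - (inverse w ^ 4))),
      (([False, True], [False, True]), inverse w ^ 2)]"

definition F_Minv :: "complex \<Rightarrow> mat" where
  "F_Minv w = mtab
     [(([True, True], [True, True]), inverse w ^ 2), (([False, False], [False, False]), inverse w ^ 2),
      (([True, False], [True, False]), w ^ 2),
      (([False, True], [True, False]), - (w ^ 2) * (w ^ 4 - (inverse w ^ 4))),
      (([False, True], [False, True]), w ^ 2)]"

definition P_flip :: mat where
  "P_flip = (\<lambda>t s. if length s = 2 \<and> t = rev s then 1 else 0)"

fun F_elem :: "complex \<Rightarrow> elem \<Rightarrow> mat" where
  "F_elem w (EId _) = idmat"
| "F_elem w (ECup _) = mtab [(([True, False], []), w), (([False, True], []), - (w ^ 5))]"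
| "F_elem w (ECap _) = mtab [(([], [True, False]), - (inverse w ^ 5)), (([], [False, True]), inverse w)]"
| "F_elem w (EHE1 _ _) = F_M w"
| "F_elem w (EHE2 _ _) = F_Minv w"
| "F_elem w (EPos _) = mcomp 2 (F_Minv w) P_flip"
| "F_elem w (ENeg _) = mcomp 2 P_flip (F_M w)"  \<comment> \<open>(M^{-1} P)^{-1} = P^{-1} M = P M\<close>

fun Gop :: "complex \<Rightarrow> diag \<Rightarrow> mat" where
  "Gop w DEmpty = idmat"
| "Gop w (DElem e) = G_elem w e"
| "Gop w (DTens a b) = mtens (length (out_hts a)) (length (in_hts a)) (Gop w a) (Gop w b)"
| "Gop w (DComp a b) = mcomp (length (in_hts a)) (Gop w a) (Gop w b)"

fun Fop :: "complex \<Rightarrow> diag \<Rightarrow> mat" where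
  "Fop w DEmpty = idmat"
| "Fop w (DElem e) = F_elem w e"
| "Fop w (DTens a b) = mtens (length (out_hts a)) (length (in_hts a)) (Fop w a) (Fop w b)"
| "Fop w (DComp a b) = mcomp (length (in_hts a)) (Fop w a) (Fop w b)"

text \<open>Pairs (i, j) with x = z_i \<prec> y = z_j.  On b_out the boundary orientation is increasing
horizontal coordinate (sgn = +1 iff i < j); on b_in it is decreasing (sgn = +1 iff j < i).\<close>

definition sv :: "bool \<Rightarrow> int" where
  "sv b = (if b then 1 else -1)"

definition corr_out :: "nat list \<Rightarrow> bool list \<Rightarrow> int" where
  "corr_out hs s = (\<Sum>i<length hs. \<Sum>j<length hs.
      if hs ! i < hs ! j then (if i < j then 1 else -1) * sv (s ! i) * sv (s ! j) else 0)"

definition corr_in :: "nat list \<Rightarrow> bool list \<Rightarrow> int" where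
  "corr_in hs s = (\<Sum>i<length hs. \<Sum>j<length hs.
      if hs ! i < hs ! j then (if j < i then 1 else -1) * sv (s ! i) * sv (s ! j) else 0)"

definition corr_op :: "complex \<Rightarrow> (bool list \<Rightarrow> int) \<Rightarrow> mat" where
  "corr_op w c = (\<lambda>t s. if t = s then w powi c s else 0)"

end

theory Submission
  imports Defs
begin

text \<open>
F and G are both multiplicative, so it suffices to compare them on elementary diagrams, where
the identity is a direct finite check, and to show that the exponent
2 wr(D) + C(b_out; t) + C(b_in; s) is additive under both operations.  Under composition the
correction terms on the glued arc cancel, because the boundary orientations of b_in and b_out
are opposite.  Under tensor product each correction amount acquires the cross term
charge t1 * charge t2 (resp. its negative), where the charge of a state is its sum of signs;
these cancel since G conserves charge.
\<close>

lemma sum_lessThan_add_split: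
  fixes f :: "nat \<Rightarrow> 'a::comm_monoid_add"
  shows "(\<Sum>i<m + n. f i) = (\<Sum>i<m. f i) + (\<Sum>i<n. f (m + i))"
  by (induction n) (simp_all add: add.assoc)

definition charge :: "bool list \<Rightarrow> int" where
  "charge t = sum_list (map sv t)"

lemma charge_append: "charge (t1 @ t2) = charge t1 + charge t2"
  by (simp add: charge_def)

lemma charge_conv_sum_nth: "charge t = (\<Sum>i<length t. sv (t ! i))"
  unfolding charge_def by (simp add: sum_list_sum_nth atLeast0LessThan)

lemma corr_in_eq_uminus_corr_out: "corr_in hs s = - corr_out hs s"
  unfolding corr_in_def corr_out_def
  by (auto simp: sum_negf[symmetric] intro!: sum.cong)

lemma corr_out_short: "length hs \<le> 1 \<Longrightarrow> corr_out hs s = 0"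
  unfolding corr_out_def by (cases hs) auto

lemma corr_out_pair:
  "corr_out [h0, h1] [a, b] =
     (if h0 < h1 then sv a * sv b else if h1 < h0 then - (sv a * sv b) else 0)"
  unfolding corr_out_def by (simp add: numeral_2_eq_2 lessThan_Suc)

text \<open>The endpoints of the second factor lie above those of the first, so only the pairs
with the lower point in the first factor and the upper in the second are mixed, and all of them
have the same sign.\<close>

lemma corr_out_append_shifted:
  assumes "\<forall>h\<in>set hs1. h < length hs1" "length t1 = length hs1" "length t2 = length hs2"
  shows "corr_out (hs1 @ map (\<lambda>h. h + length hs1) hs2) (t1 @ t2)
           = corr_out hs1 t1 + corr_out hs2 t2 + charge t1 * charge t2"
proof -
  let ?n = "length hs1" and ?m = "length hs2"
  let ?hs = "hs1 @ map (\<lambda>h. h + ?n) hs2" and ?t = "t1 @ t2"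
  define f where "f i j = (if ?hs ! i < ?hs ! j
      then (if i < j then 1 else -1) * sv (?t ! i) * sv (?t ! j) else (0::int))" for i j
  have low: "hs1 ! i < ?n" if "i < ?n" for i
    using assms(1) that by simp
  have cross: "?hs ! i < ?hs ! (?n + j)" if "i < ?n" "j < ?m" for i j
    using low[OF that(1)] that by (simp add: nth_append)
  have "corr_out ?hs ?t = (\<Sum>i<?n + ?m. \<Sum>j<?n + ?m. f i j)"
    unfolding corr_out_def f_def by simp
  also have "\<dots> = (\<Sum>i<?n. \<Sum>j<?n. f i j) + (\<Sum>i<?n. \<Sum>j<?m. f i (?n + j))
                 + (\<Sum>i<?m. \<Sum>j<?n. f (?n + i) j) + (\<Sum>i<?m. \<Sum>j<?m. f (?n + i) (?n + j))"
    by (simp add: sum_lessThan_add_split sum.distrib add_ac)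
  also have "(\<Sum>i<?n. \<Sum>j<?n. f i j) = corr_out hs1 t1"
    unfolding corr_out_def f_def using assms by (auto simp: nth_append intro!: sum.cong)
  also have "(\<Sum>i<?n. \<Sum>j<?m. f i (?n + j)) = (\<Sum>i<?n. \<Sum>j<?m. sv (t1 ! i) * sv (t2 ! j))"
    unfolding f_def using assms cross by (auto simp: nth_append intro!: sum.cong)
  also have "\<dots> = charge t1 * charge t2"
    by (simp add: charge_conv_sum_nth sum_product assms)
  also have "(\<Sum>i<?m. \<Sum>j<?n. f (?n + i) j) = 0"
  proof (intro sum.neutral ballI)
    fix i j
    assume "i \<in> {..<?m}" "j \<in> {..<?n}"
    then show "f (?n + i) j = 0"
      using cross[of j i] unfolding f_def by simp
  qed
  also have "(\<Sum>i<?m. \<Sum>j<?m. f (?n + i) (?n + j)) = corr_out hs2 t2"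
    unfolding corr_out_def f_def using assms by (auto simp: nth_append intro!: sum.cong)
  finally show ?thesis by simp
qed

lemma hts_less_length:
  "(\<forall>h\<in>set (out_hts D). h < length (out_hts D)) \<and> (\<forall>h\<in>set (in_hts D). h < length (in_hts D))"
proof (induction D)
  case (DElem e)
  then show ?case by (cases e) auto
qed auto

lemma mtab_nonzero_in_table: "mtab tab t s \<noteq> 0 \<Longrightarrow> (t, s) \<in> fst ` set tab"
  unfolding mtab_def
  by (auto split: option.splits dest: map_of_SomeD intro: rev_image_eqI)

lemma Gop_nonzero_imp_charge_eq: "Gop w D t s \<noteq> 0 \<Longrightarrow> charge t = charge s"
proof (induction D arbitrary: t s)
  case DEmpty
  then show ?case by (simp add: idmat_def split: if_splits)
next
  case (DElem e)
  then show ?case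
    by (cases e) (auto dest!: mtab_nonzero_in_table simp: idmat_def charge_def sv_def split: if_splits)
next
  case (DTens a b)
  let ?n = "length (out_hts a)" and ?m = "length (in_hts a)"
  from DTens.prems have "Gop w a (take ?n t) (take ?m s) \<noteq> 0" "Gop w b (drop ?n t) (drop ?m s) \<noteq> 0"
    by (auto simp: mtens_def)
  then have "charge (take ?n t) = charge (take ?m s)" "charge (drop ?n t) = charge (drop ?m s)"
    using DTens.IH by blast+
  then show ?case
    by (metis append_take_drop_id charge_append)
next
  case (DComp a b)
  from DComp.prems obtain u where "Gop w a t u * Gop w b u s \<noteq> 0"
    unfolding mcomp_def Gop.simps by (meson sum.not_neutral_contains_not_neutral)
  then show ?case
    using DComp.IH by auto
qed

lemma finite_bool_lists_length: "finite {u :: bool list. length u = k}"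
  using finite_lists_length_eq[of "UNIV :: bool set" k] by simp

lemma mcomp_corr_op_left: "length t = k \<Longrightarrow> mcomp k (corr_op w c) A t s = w powi c t * A t s"
  unfolding mcomp_def corr_op_def
  by (simp add: finite_bool_lists_length if_distrib[of "\<lambda>x. x * _"] cong: if_cong)

lemma mcomp_corr_op_right: "length s = k \<Longrightarrow> mcomp k A (corr_op w c) t s = A t s * w powi c s"
  unfolding mcomp_def corr_op_def
  by (simp add: finite_bool_lists_length if_distrib[of "\<lambda>x. _ * x"] cong: if_cong)

lemma length2_cases:
  assumes "length t = 2"
  obtains a b where "t = [a, b]"
  using assms by (cases t; cases "tl t") (auto simp: numeral_2_eq_2)

lemma length1_cases:
  assumes "length t = 1"
  obtains a where "t = [a]"
  using assms by (cases t) auto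

lemma mcomp_two:
  "mcomp 2 A B t s = (\<Sum>u\<in>{[True, True], [True, False], [False, True], [False, False]}. A t u * B u s)"
proof -
  have "{u :: bool list. length u = 2} = {[True, True], [True, False], [False, True], [False, False]}"
    by (auto elim!: length2_cases)
  then show ?thesis
    unfolding mcomp_def by simp
qed

lemma mcomp_P_flip_right: "length s = 2 \<Longrightarrow> mcomp 2 A P_flip t s = A t (rev s)"
  by (elim length2_cases) (simp add: mcomp_two P_flip_def)

lemma mcomp_P_flip_left: "length t = 2 \<Longrightarrow> mcomp 2 P_flip B t s = B (rev t) s"
  by (elim length2_cases) (simp add: mcomp_two P_flip_def)

definition twist_exp :: "diag \<Rightarrow> bool list \<Rightarrow> bool list \<Rightarrow> int" where
  "twist_exp D t s = 2 * writhe D + corr_out (out_hts D) t + corr_in (in_hts D) s"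

lemma F_elem_eq_twisted_G_elem:
  assumes "w \<noteq> 0" "length t = length (elem_out_hts e)" "length s = length (elem_in_hts e)"
  shows "F_elem w e t s = w powi twist_exp (DElem e) t s * G_elem w e t s"
  using assms unfolding twist_exp_def
  by (cases e; auto elim!: length2_cases length1_cases
        simp: mcomp_P_flip_right mcomp_P_flip_left corr_in_eq_uminus_corr_out corr_out_pair
          corr_out_short mtab_def idmat_def sv_def F_M_def F_Minv_def;
      simp add: power_int_minus field_simps eval_nat_numeral)

lemma twist_exp_DTens:
  assumes "length t1 = length (out_hts a)" "length t2 = length (out_hts b)"
    and "length s1 = length (in_hts a)" "length s2 = length (in_hts b)"
    and "charge t1 = charge s1" "charge t2 = charge s2"
  shows "twist_exp (DTens a b) (t1 @ t2) (s1 @ s2) = twist_exp a t1 s1 + twist_exp b t2 s2"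
  using assms hts_less_length[of a]
    corr_out_append_shifted[of "out_hts a" t1 t2 "out_hts b"]
    corr_out_append_shifted[of "in_hts a" s1 s2 "in_hts b"]
  by (simp add: twist_exp_def corr_in_eq_uminus_corr_out)

lemma twist_exp_DComp:
  assumes "in_hts a = out_hts b"
  shows "twist_exp (DComp a b) t s = twist_exp a t u + twist_exp b u s"
  using assms by (simp add: twist_exp_def corr_in_eq_uminus_corr_out)

lemma Fop_eq_twisted_Gop:
  assumes "w \<noteq> 0" "wf_diag D" "length t = length (out_hts D)" "length s = length (in_hts D)"
  shows "Fop w D t s = w powi twist_exp D t s * Gop w D t s"
  using assms(2-4)
proof (induction D arbitrary: t s)
  case DEmpty
  then show ?case by (simp add: twist_exp_def corr_in_eq_uminus_corr_out corr_out_short)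
next
  case (DElem e)
  then show ?case using F_elem_eq_twisted_G_elem[OF assms(1)] by simp
next
  case (DTens a b)
  let ?n = "length (out_hts a)" and ?m = "length (in_hts a)"
  define t1 t2 s1 s2 where "t1 = take ?n t" "t2 = drop ?n t" "s1 = take ?m s" "s2 = drop ?m s"
  have lengths: "length t1 = ?n" "length t2 = length (out_hts b)"
      "length s1 = ?m" "length s2 = length (in_hts b)"
    using DTens.prems by (simp_all add: t1_t2_s1_s2_def)
  have F: "Fop w (DTens a b) t s = Fop w a t1 s1 * Fop w b t2 s2"
    and G: "Gop w (DTens a b) t s = Gop w a t1 s1 * Gop w b t2 s2"
    by (simp_all add: mtens_def t1_t2_s1_s2_def)
  have Fa: "Fop w a t1 s1 = w powi twist_exp a t1 s1 * Gop w a t1 s1"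
    and Fb: "Fop w b t2 s2 = w powi twist_exp b t2 s2 * Gop w b t2 s2"
    using DTens lengths by simp_all
  show ?case
  proof (cases "Gop w a t1 s1 = 0 \<or> Gop w b t2 s2 = 0")
    case True
    then show ?thesis using F G Fa Fb by auto
  next
    case False
    then have "charge t1 = charge s1" "charge t2 = charge s2"
      using Gop_nonzero_imp_charge_eq by blast+
    then have "twist_exp (DTens a b) t s = twist_exp a t1 s1 + twist_exp b t2 s2"
      using twist_exp_DTens[OF lengths] by (simp add: t1_t2_s1_s2_def)
    then show ?thesis
      unfolding F G Fa Fb using assms(1) by (simp add: power_int_add ac_simps)
  qed
next
  case (DComp a b)
  have "Fop w (DComp a b) t s = (\<Sum>u | length u = length (in_hts a). Fop w a t u * Fop w b u s)"
    by (simp add: mcomp_def)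
  also have "\<dots> = (\<Sum>u | length u = length (in_hts a). w powi twist_exp (DComp a b) t s * (Gop w a t u * Gop w b u s))"
  proof (intro sum.cong refl)
    fix u :: "bool list"
    assume "u \<in> {u. length u = length (in_hts a)}"
    with DComp have "Fop w a t u * Fop w b u s
        = w powi twist_exp a t u * Gop w a t u * (w powi twist_exp b u s * Gop w b u s)"
      by simp
    also have "\<dots> = w powi twist_exp (DComp a b) t s * (Gop w a t u * Gop w b u s)"
      using DComp.prems(1) assms(1) by (simp add: twist_exp_DComp[of a b t s u] power_int_add ac_simps)
    finally show "Fop w a t u * Fop w b u s = w powi twist_exp (DComp a b) t s * (Gop w a t u * Gop w b u s)" .
  qed
  also have "\<dots> = w powi twist_exp (DComp a b) t s * Gop w (DComp a b) t s"
    by (simp add: mcomp_def sum_distrib_left)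
  finally show ?case .
qed

theorem lemma5p15:
  fixes w :: complex and D :: diag
  assumes "w \<noteq> 0" and "wf_diag D"
  shows "\<forall>t s. length t = length (out_hts D) \<longrightarrow> length s = length (in_hts D) \<longrightarrow>
           Fop w D t s =
           w powi (2 * writhe D) *
           mcomp (length (out_hts D))
             (corr_op w (corr_out (out_hts D)))
             (mcomp (length (in_hts D)) (Gop w D) (corr_op w (corr_in (in_hts D)))) t s"
proof (intro allI impI)
  fix t s :: "bool list"
  assume "length t = length (out_hts D)" "length s = length (in_hts D)"
  then show "Fop w D t s =
           w powi (2 * writhe D) *
           mcomp (length (out_hts D))
             (corr_op w (corr_out (out_hts D)))
             (mcomp (length (in_hts D)) (Gop w D) (corr_op w (corr_in (in_hts D)))) t s"
    using Fop_eq_twisted_Gop[OF assms] assms(1)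
    by (simp add: mcomp_corr_op_left mcomp_corr_op_right twist_exp_def power_int_add ac_simps)
qed

end
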